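(* Let $n\ge1$ be an integer, $p\in(0,1)$, $q:=1-p$, and let $j_*:=\lfloor(n+1)p\rfloor+1$. Then for every integer $j\ge j_*$, $$j-\tfrac32<j-1<y_j\le j-\tfrac12<x_j\le y_{j+1}\le j+\tfrac12;$$ moreover, if $j\le n$, then $y_j<j-\frac12$ and $x_j<y_{j+1}$.
   Context: For $j\in\mathbb{Z}$, $q_j:=\mathbf{P}(B_n\ge j)$ and $p_j:=q_j-q_{j+1}=\mathbf{P}(B_n=j)=\binom nj p^jq^{n-j}$, where $B_n$ is binomial with parameters $n,p$. For each integer $j$ with $j_*\le j\le n$ (equivalently $1\le j\le n$ and $j>(n+1)p$, which gives $p_{j-1}>p_j$), define $$x_j:=j-\tfrac12+\frac{q_j}{p_j}+\frac{\frac{q_j}{p_{j-1}}-\frac{q_j}{p_j}}{\ln\frac{p_{j-1}}{p_j}},\qquad y_j:=j-\tfrac12+\frac{q_j}{p_{j-1}}+\frac{\frac{q_j}{p_{j-1}}-\frac{q_j}{p_j}}{\ln\frac{p_{j-1}}{p_j}},$$ and for integers $j\ge n+1$ define $x_j:=j+\frac12$, $y_j:=j-\frac12$. *)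

theory Defs
  imports Complex_Main
begin

definition bin_pmf :: "nat \<Rightarrow> real \<Rightarrow> int \<Rightarrow> real" where
  "bin_pmf n p j = (if 0 \<le> j \<and> j \<le> int n
      then real (n choose nat j) * p ^ nat j * (1 - p) ^ (n - nat j) else 0)"

definition bin_tail :: "nat \<Rightarrow> real \<Rightarrow> int \<Rightarrow> real" where
  "bin_tail n p j = (\<Sum>i\<in>{j..int n}. bin_pmf n p i)"

definition xseq :: "nat \<Rightarrow> real \<Rightarrow> int \<Rightarrow> real" where
  "xseq n p j = (if j \<le> int n then
      real_of_int j - 1/2 + bin_tail n p j / bin_pmf n p j
      + (bin_tail n p j / bin_pmf n p (j - 1) - bin_tail n p j / bin_pmf n p j)
        / ln (bin_pmf n p (j - 1) / bin_pmf n p j)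
    else real_of_int j + 1/2)"

definition yseq :: "nat \<Rightarrow> real \<Rightarrow> int \<Rightarrow> real" where
  "yseq n p j = (if j \<le> int n then
      real_of_int j - 1/2 + bin_tail n p j / bin_pmf n p (j - 1)
      + (bin_tail n p j / bin_pmf n p (j - 1) - bin_tail n p j / bin_pmf n p j)
        / ln (bin_pmf n p (j - 1) / bin_pmf n p j)
    else real_of_int j - 1/2)"

end

theory Submission
  imports Defs
begin

text \<open>
  For 1 \<le> j \<le> n put A = q_j/p_{j-1} and B = q_j/p_j. Then y_j = j - 1/2 + A - L(A,B) and
  x_j = j - 1/2 + B - L(A,B), where L is the logarithmic mean. Above the mode p_j < p_{j-1},
  so A < B, and comparing the tail with a geometric series gives B - A < 1; hence
  A < L < (A+B)/2 < B yields the bounds on y_j and x_j. Since q_j = p_j + q_{j+1}, the A of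
  index j+1 equals B - 1, so x_j < y_{j+1} says that L decreases from j to j+1. This holds
  because L(a,b) = b \<psi>(b/a) with \<psi>(r) = (1 - 1/r)/ln r decreasing, while B decreases and
  B/A = p_{j-1}/p_j increases (log-concavity of the binomial distribution).
\<close>

definition log_mean :: "real \<Rightarrow> real \<Rightarrow> real" where
  "log_mean a b = (b - a) / (ln b - ln a)"

lemma log_mean_bounds:
  assumes "0 < a" "a < b"
  shows "a < log_mean a b" "log_mean a b < b"
proof -
  have ln_pos: "0 < ln b - ln a"
    using assms by simp
  have "ln b - ln a < (b - a) / a" "ln a - ln b < (a - b) / b"
    using assms by (auto intro!: ln_diff_less)
  then show "a < log_mean a b" "log_mean a b < b"
    using assms ln_pos by (simp_all add: log_mean_def field_simps)
qed

lemma ln_gt_two_mul_diff_div_add: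
  fixes r :: real
  assumes "1 < r"
  shows "2 * (r - 1) / (r + 1) < ln r"
proof -
  let ?f = "\<lambda>x. ln x - 2 * (x - 1) / (x + 1)"
  have "?f 1 < ?f r"
  proof (rule DERIV_pos_imp_increasing_open[OF assms])
    fix x :: real
    assume x: "1 < x" "x < r"
    have "x \<noteq> 0" "x + 1 \<noteq> 0"
      using x by auto
    then have "1 / x - 4 / (x + 1)\<^sup>2 = (x - 1)\<^sup>2 / (x * (x + 1)\<^sup>2)"
      by (simp add: divide_simps power2_eq_square) (simp add: algebra_simps)
    also have "\<dots> > 0"
      using x by simp
    finally show "\<exists>y. (?f has_real_derivative y) (at x) \<and> 0 < y"
      using x by (intro exI conjI) (auto intro!: derivative_eq_intros simp: power2_eq_square field_simps)
  qed (intro continuous_intros, auto)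
  then show ?thesis
    by simp
qed

lemma log_mean_less_arith_mean:
  assumes "0 < a" "a < b"
  shows "log_mean a b < (a + b) / 2"
proof -
  have "2 * (b / a - 1) / (b / a + 1) < ln (b / a)"
    using assms by (intro ln_gt_two_mul_diff_div_add) simp
  moreover have "2 * (b / a - 1) / (b / a + 1) = 2 * (b - a) / (b + a)"
    using assms by (simp add: divide_simps)
  ultimately have "2 * (b - a) / (b + a) < ln b - ln a"
    using assms by (simp add: ln_divide_pos)
  then have "2 * (b - a) < (ln b - ln a) * (a + b)"
    using assms by (simp add: pos_divide_less_eq add.commute)
  then show ?thesis
    using assms by (simp add: log_mean_def pos_divide_less_eq mult_ac)
qed

lemma one_minus_inverse_div_ln_strict_antimono:
  fixes r s :: real
  assumes "1 < r" "r < s"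
  shows "(1 - 1 / s) / ln s < (1 - 1 / r) / ln r"
proof -
  let ?f = "\<lambda>x. (1 - 1 / x) / ln x"
  have "?f s < ?f r"
  proof (rule DERIV_neg_imp_decreasing[OF assms(2)])
    fix x :: real
    assume "r \<le> x" "x \<le> s"
    then have x: "1 < x"
      using assms by simp
    have "ln x < x - 1"
      using ln_add_one_self_less_self[of "x - 1"] x by simp
    then have "(ln x - (x - 1)) / (x\<^sup>2 * (ln x)\<^sup>2) < 0"
      using x by (intro divide_neg_pos) auto
    then show "\<exists>y. (?f has_real_derivative y) (at x) \<and> y < 0"
      using x by (intro exI conjI) (auto intro!: derivative_eq_intros simp: field_simps power2_eq_square)
  qed
  then show ?thesis .
qed

lemma log_mean_eq_mult:
  assumes "0 < a" "a < b"
  shows "log_mean a b = b * ((1 - 1 / (b / a)) / ln (b / a))"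
  using assms by (simp add: log_mean_def ln_divide_pos field_simps)

lemma log_mean_strict_mono:
  assumes "0 < a" "a < b" "0 < a'" "a' < b'" "b' \<le> b" "b / a < b' / a'"
  shows "log_mean a' b' < log_mean a b"
proof -
  define r r' where "r = b / a" and "r' = b' / a'"
  have "1 < r" "r < r'"
    using assms by (simp_all add: r_def r'_def)
  then have "(1 - 1 / r') / ln r' < (1 - 1 / r) / ln r" "0 < (1 - 1 / r') / ln r'"
    using one_minus_inverse_div_ln_strict_antimono by auto
  then have "b' * ((1 - 1 / r') / ln r') < b * ((1 - 1 / r) / ln r)"
    using assms by (intro mult_le_less_imp_less) auto
  then show ?thesis
    using assms by (simp add: log_mean_eq_mult r_def r'_def)
qed

definition bin_ratio :: "nat \<Rightarrow> real \<Rightarrow> int \<Rightarrow> real" where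
  "bin_ratio n p i = (real n - of_int i) * p / ((of_int i + 1) * (1 - p))"

lemma bin_tail_Suc: "bin_tail n p i = bin_pmf n p i + bin_tail n p (i + 1)"
proof (cases "i \<le> int n")
  case True
  then have "{i..int n} = insert i {i + 1..int n}"
    by auto
  then show ?thesis
    by (simp add: bin_tail_def)
qed (simp add: bin_tail_def bin_pmf_def)

context
  fixes n :: nat and p :: real
  assumes p: "0 < p" "p < 1"
begin

lemma bin_pmf_pos: "0 \<le> i \<Longrightarrow> i \<le> int n \<Longrightarrow> 0 < bin_pmf n p i"
  using p by (auto simp: bin_pmf_def)

lemma bin_pmf_nonneg: "0 \<le> bin_pmf n p i"
  using p by (simp add: bin_pmf_def)

lemma bin_tail_nonneg: "0 \<le> bin_tail n p i"
  unfolding bin_tail_def by (intro sum_nonneg bin_pmf_nonneg)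

lemma bin_pmf_succ:
  assumes "0 \<le> i"
  shows "bin_pmf n p (i + 1) = bin_ratio n p i * bin_pmf n p i"
proof (cases "i < int n")
  case True
  then obtain k where k: "i = int k" "k < n"
    using assms by (metis nonneg_int_cases of_nat_less_iff)
  have choose: "real (n choose Suc k) = real (n choose k) * (real n - real k) / (real k + 1)"
  proof -
    have "(n choose Suc k) * Suc k = (n choose k) * (n - k)"
      by (metis binomial_absorb_comp binomial_absorption mult.commute)
    then have "real ((n choose Suc k) * Suc k) = real ((n choose k) * (n - k))"
      by (simp only:)
    then show ?thesis
      using k by (simp add: field_simps)
  qed
  have "(1 - p) ^ (n - k) = (1 - p) * (1 - p) ^ (n - (k + 1))"
    using k by (simp flip: power_Suc add: Suc_diff_Suc)
  then have "bin_ratio n p i * bin_pmf n p i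
      = real (n choose k) * (real n - real k) / (real k + 1) * p ^ (k + 1) * (1 - p) ^ (n - (k + 1))"
    using k p by (simp add: bin_pmf_def bin_ratio_def)
  then show ?thesis
    using k by (simp add: bin_pmf_def nat_add_distrib choose)
qed (auto simp: bin_pmf_def bin_ratio_def)

lemma bin_ratio_strict_antimono:
  assumes "0 \<le> i" "i < k"
  shows "bin_ratio n p k < bin_ratio n p i"
proof -
  have "of_int i * (real n + 1) < of_int k * (real n + 1)"
    using assms by (intro mult_strict_right_mono) auto
  then have "(real n - of_int k) * (of_int i + 1) < (real n - of_int i) * (of_int k + 1)"
    by (simp add: algebra_simps)
  moreover have "0 < of_int i + (1::real)" "0 < of_int k + (1::real)"
    using assms by linarith+
  ultimately have "(real n - of_int k) / (of_int k + 1) < (real n - of_int i) / (of_int i + 1)"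
    by (simp add: field_simps)
  then have "(real n - of_int k) / (of_int k + 1) * (p / (1 - p))
      < (real n - of_int i) / (of_int i + 1) * (p / (1 - p))"
    using p by (intro mult_strict_right_mono) auto
  then show ?thesis
    by (simp add: bin_ratio_def)
qed

lemma bin_ratio_pos: "0 \<le> i \<Longrightarrow> i < int n \<Longrightarrow> 0 < bin_ratio n p i"
  using p by (simp add: bin_ratio_def)

lemma index_ge_one:
  assumes "(real n + 1) * p < of_int j"
  shows "1 \<le> j"
proof -
  have "0 < (real n + 1) * p"
    using p by simp
  then have "0 < (of_int j :: real)"
    using assms by linarith
  then show ?thesis
    by simp
qed

lemma bin_ratio_less_one:
  assumes "(real n + 1) * p < of_int j"
  shows "bin_ratio n p (j - 1) < 1"
proof -
  have "0 < of_int j * (1 - p)"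
    using index_ge_one[OF assms] p by simp
  then show ?thesis
    using assms by (simp add: bin_ratio_def algebra_simps)
qed

lemma bin_tail_geometric_bound:
  assumes "0 \<le> i" "bin_ratio n p i < 1"
  shows "bin_tail n p i * (1 - bin_ratio n p i) \<le> bin_pmf n p i"
proof (cases "i \<le> int n")
  case True
  then have "0 \<le> i \<longrightarrow> bin_ratio n p i < 1 \<longrightarrow> bin_tail n p i * (1 - bin_ratio n p i) \<le> bin_pmf n p i"
  proof (induction i rule: int_le_induct)
    case base
    have "bin_tail n p (int n + 1) = 0"
      by (simp add: bin_tail_def)
    then show ?case
      using bin_tail_Suc[of n p "int n"] by (simp add: bin_ratio_def)
  next
    case (step i)
    show ?case
    proof (intro impI)
      assume i: "0 \<le> i - 1" and ratio: "bin_ratio n p (i - 1) < 1"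
      have antimono: "bin_ratio n p i < bin_ratio n p (i - 1)"
        using i by (intro bin_ratio_strict_antimono) auto
      then have "bin_tail n p i * (1 - bin_ratio n p (i - 1)) \<le> bin_tail n p i * (1 - bin_ratio n p i)"
        using bin_tail_nonneg by (intro mult_left_mono) auto
      also have "\<dots> \<le> bin_pmf n p i"
        using step.IH i ratio antimono by auto
      also have "\<dots> = bin_ratio n p (i - 1) * bin_pmf n p (i - 1)"
        using bin_pmf_succ[of "i - 1"] i by simp
      finally show "bin_tail n p (i - 1) * (1 - bin_ratio n p (i - 1)) \<le> bin_pmf n p (i - 1)"
        using bin_tail_Suc[of n p "i - 1"] by (simp add: algebra_simps)
    qed
  qed
  with assms show ?thesis
    by blast
qed (simp add: bin_tail_def bin_pmf_def)

lemma bin_tail_pmf_quotients: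
  assumes "(real n + 1) * p < of_int j" "j \<le> int n"
  defines "A \<equiv> bin_tail n p j / bin_pmf n p (j - 1)"
    and "B \<equiv> bin_tail n p j / bin_pmf n p j"
  shows "0 < A" "A < B" "B - A < 1"
proof -
  define t where "t = bin_ratio n p (j - 1)"
  have j: "1 \<le> j"
    using index_ge_one assms(1) .
  have t: "0 < t" "t < 1"
    using j assms bin_ratio_pos bin_ratio_less_one by (auto simp: t_def)
  have pmf: "0 < bin_pmf n p (j - 1)" "0 < bin_pmf n p j"
    using j assms(2) bin_pmf_pos by auto
  have pmf_succ: "bin_pmf n p j = t * bin_pmf n p (j - 1)"
    using j bin_pmf_succ[of "j - 1"] by (simp add: t_def)
  have tail: "0 < bin_tail n p j"
    using bin_tail_Suc[of n p j] bin_tail_nonneg pmf by (simp add: add_pos_nonneg)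
  have "bin_ratio n p j < t"
    using j by (auto simp: t_def intro: bin_ratio_strict_antimono)
  then have "bin_tail n p j * (1 - t) < bin_tail n p j * (1 - bin_ratio n p j)"
    using tail by simp
  also have "\<dots> \<le> bin_pmf n p j"
    using j t \<open>bin_ratio n p j < t\<close> by (intro bin_tail_geometric_bound) auto
  finally have tail_bound: "bin_tail n p j * (1 - t) < bin_pmf n p j" .
  have A: "A = t * B"
    using pmf t pmf_succ by (simp add: A_def B_def)
  moreover have "0 < B"
    using pmf tail by (simp add: B_def)
  ultimately show "0 < A" "A < B"
    using t by simp_all
  have "B - A = bin_tail n p j * (1 - t) / bin_pmf n p j"
    using A by (simp add: B_def diff_divide_distrib algebra_simps)
  also have "\<dots> < 1"
    using pmf tail_bound by simp
  finally show "B - A < 1" .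
qed

lemma yseq_xseq_eq_log_mean:
  assumes "1 \<le> j" "j \<le> int n"
  defines "A \<equiv> bin_tail n p j / bin_pmf n p (j - 1)"
    and "B \<equiv> bin_tail n p j / bin_pmf n p j"
  shows "yseq n p j = of_int j - 1/2 + A - log_mean A B"
    and "xseq n p j = of_int j - 1/2 + B - log_mean A B"
proof -
  have pmf: "0 < bin_pmf n p (j - 1)" "0 < bin_pmf n p j"
    using assms bin_pmf_pos by auto
  then have "0 < bin_tail n p j"
    using bin_tail_Suc[of n p j] bin_tail_nonneg by (simp add: add_pos_nonneg)
  then have "B / A = bin_pmf n p (j - 1) / bin_pmf n p j" "0 < A" "0 < B"
    using pmf by (simp_all add: A_def B_def)
  then have "ln (bin_pmf n p (j - 1) / bin_pmf n p j) = ln B - ln A"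
    by (metis ln_divide_pos)
  then show "yseq n p j = of_int j - 1/2 + A - log_mean A B"
    and "xseq n p j = of_int j - 1/2 + B - log_mean A B"
    using assms(2) unfolding yseq_def xseq_def A_def[symmetric] B_def[symmetric]
    by (simp_all add: log_mean_def diff_divide_distrib)
qed

lemma bin_pmf_log_concave:
  assumes "1 \<le> j" "j < int n"
  shows "bin_pmf n p (j - 1) / bin_pmf n p j < bin_pmf n p j / bin_pmf n p (j + 1)"
proof -
  have pmf: "0 < bin_pmf n p (j - 1)" "0 < bin_pmf n p j"
    using assms bin_pmf_pos by auto
  have ratio: "0 < bin_ratio n p j" "bin_ratio n p j < bin_ratio n p (j - 1)"
    using assms bin_ratio_pos bin_ratio_strict_antimono by auto
  then show ?thesis
    using assms pmf bin_pmf_succ[of j] bin_pmf_succ[of "j - 1"]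
    by (simp add: divide_strict_left_mono)
qed

lemma yseq_strict_bounds:
  assumes "(real n + 1) * p < of_int j" "j \<le> int n"
  shows "of_int j - 1 < yseq n p j" "yseq n p j < of_int j - 1/2"
proof -
  define A B where "A = bin_tail n p j / bin_pmf n p (j - 1)" and "B = bin_tail n p j / bin_pmf n p j"
  have AB: "0 < A" "A < B" "B - A < 1"
    using bin_tail_pmf_quotients[OF assms] by (simp_all add: A_def B_def)
  have j: "1 \<le> j"
    using index_ge_one assms(1) .
  have "log_mean A B < (A + B) / 2" "A < log_mean A B"
    using AB log_mean_less_arith_mean log_mean_bounds by auto
  then show "of_int j - 1 < yseq n p j" "yseq n p j < of_int j - 1/2"
    using yseq_xseq_eq_log_mean(1)[OF j assms(2)] AB by (simp_all add: A_def B_def)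
qed

lemma yseq_le:
  assumes "(real n + 1) * p < of_int j"
  shows "yseq n p j \<le> of_int j - 1/2"
  using yseq_strict_bounds[OF assms] by (cases "j \<le> int n") (simp_all add: yseq_def)

lemma xseq_gt:
  assumes "(real n + 1) * p < of_int j" "j \<le> int n"
  shows "of_int j - 1/2 < xseq n p j"
proof -
  define A B where "A = bin_tail n p j / bin_pmf n p (j - 1)" and "B = bin_tail n p j / bin_pmf n p j"
  have "log_mean A B < B"
    using bin_tail_pmf_quotients[OF assms] log_mean_bounds by (simp add: A_def B_def)
  then show ?thesis
    using yseq_xseq_eq_log_mean(2)[OF index_ge_one[OF assms(1)] assms(2)] by (simp add: A_def B_def)
qed

lemma xseq_less_yseq_succ:
  assumes "(real n + 1) * p < of_int j" "j \<le> int n"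
  shows "xseq n p j < yseq n p (j + 1)"
proof -
  define A B where "A = bin_tail n p j / bin_pmf n p (j - 1)" and "B = bin_tail n p j / bin_pmf n p j"
  have j: "1 \<le> j"
    using index_ge_one assms(1) .
  have AB: "0 < A" "A < B" "B - A < 1"
    using bin_tail_pmf_quotients[OF assms] by (simp_all add: A_def B_def)
  have x: "xseq n p j = of_int j - 1/2 + B - log_mean A B"
    using yseq_xseq_eq_log_mean(2)[OF j assms(2)] by (simp add: A_def B_def)
  show ?thesis
  proof (cases "j = int n")
    case True
    have "B = 1"
      using True bin_tail_Suc[of n p j] bin_pmf_pos[of j] j by (simp add: B_def bin_tail_def)
    moreover have "A < log_mean A B"
      using AB log_mean_bounds by simp
    ultimately show ?thesis
      using True x AB by (simp add: yseq_def)
  next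
    case False
    define A' B' where "A' = bin_tail n p (j + 1) / bin_pmf n p j"
      and "B' = bin_tail n p (j + 1) / bin_pmf n p (j + 1)"
    have succ: "(real n + 1) * p < of_int (j + 1)" "j + 1 \<le> int n"
      using assms False by auto
    have A'B': "0 < A'" "A' < B'" "B' - A' < 1"
      using bin_tail_pmf_quotients[OF succ] by (simp_all add: A'_def B'_def)
    have y: "yseq n p (j + 1) = of_int j + 1/2 + A' - log_mean A' B'"
      using yseq_xseq_eq_log_mean(1)[of "j + 1"] j succ by (simp add: A'_def B'_def)
    have pmf: "0 < bin_pmf n p (j - 1)" "0 < bin_pmf n p j"
      using j assms(2) bin_pmf_pos by auto
    have A': "A' = B - 1"
      using pmf bin_tail_Suc[of n p j] by (simp add: A'_def B_def field_simps)
    have "B / A = bin_pmf n p (j - 1) / bin_pmf n p j" "B' / A' = bin_pmf n p j / bin_pmf n p (j + 1)"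
      using AB A'B' pmf by (auto simp: A_def B_def A'_def B'_def)
    then have "B / A < B' / A'"
      using bin_pmf_log_concave j succ by simp
    then have "log_mean A' B' < log_mean A B"
      using AB A'B' A' by (intro log_mean_strict_mono) auto
    then show ?thesis
      using x y A' by simp
  qed
qed

end

theorem proposition2p9:
  fixes n :: nat and p :: real and j :: int
  assumes "n \<ge> 1" and "0 < p" and "p < 1"
    and "j \<ge> \<lfloor>(real n + 1) * p\<rfloor> + 1"
  shows "real_of_int j - 3/2 < real_of_int j - 1
      \<and> real_of_int j - 1 < yseq n p j
      \<and> yseq n p j \<le> real_of_int j - 1/2
      \<and> real_of_int j - 1/2 < xseq n p j
      \<and> xseq n p j \<le> yseq n p (j + 1)
      \<and> yseq n p (j + 1) \<le> real_of_int j + 1/2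
      \<and> (j \<le> int n \<longrightarrow> yseq n p j < real_of_int j - 1/2 \<and> xseq n p j < yseq n p (j + 1))"
proof -
  have above_mode: "(real n + 1) * p < of_int j" "(real n + 1) * p < of_int (j + 1)"
    using assms(4) by linarith+
  have "yseq n p (j + 1) \<le> of_int j + 1/2"
    using yseq_le[OF assms(2,3) above_mode(2)] by simp
  moreover have "of_int j - 1 < yseq n p j \<and> yseq n p j < of_int j - 1/2
      \<and> of_int j - 1/2 < xseq n p j \<and> xseq n p j < yseq n p (j + 1)" if "j \<le> int n"
    using that above_mode(1) assms(2,3)
    by (simp add: yseq_strict_bounds xseq_gt xseq_less_yseq_succ)
  moreover have "yseq n p j = of_int j - 1/2 \<and> xseq n p j = of_int j + 1/2
      \<and> yseq n p (j + 1) = of_int j + 1/2" if "\<not> j \<le> int n"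
    using that by (simp add: xseq_def yseq_def)
  ultimately show ?thesis
    by fastforce
qed

end
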